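(* Let $n\ge 2$ and $\alpha\in(0,2]$. Define the $n$-qubit observables $\mathcal{M}_Z=(|0\rangle\langle 0|)^{\otimes n}+(|1\rangle\langle 1|)^{\otimes n}$ and $\mathcal{M}_X=\sigma_x^{\otimes n}$, where $\sigma_x=|0\rangle\langle 1|+|1\rangle\langle 0|$. Then for every biseparable $n$-qubit state $\rho$, $$\alpha\operatorname{Tr}[\rho\,\mathcal{M}_Z]\pm\operatorname{Tr}[\rho\,\mathcal{M}_X]\le \frac{\alpha}{2}+1$$ for both choices of sign.
   Context: $\{|0\rangle,|1\rangle\}$ is the computational basis of $\mathbb{C}^2$. An $n$-qubit pure state is biseparable if the $n$ qubits can be split into two nonempty disjoint subsets such that the state is a tensor product of a pure state on the first subset and a pure state on the second. A mixed $n$-qubit state is biseparable if it is a convex combination of projectors onto biseparable pure states (the bipartitions may differ between terms). *)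

theory Defs
  imports Complex_Main
begin

text \<open>Qubits are labelled 0..n-1. A computational basis state of a set A of qubits
 is an assignment x :: nat \<Rightarrow> bool vanishing outside A (False = |0>, True = |1>).\<close>

definition asg :: "nat set \<Rightarrow> (nat \<Rightarrow> bool) set" where
  "asg A = {x. \<forall>i. i \<notin> A \<longrightarrow> \<not> x i}"

definition restr :: "(nat \<Rightarrow> bool) \<Rightarrow> nat set \<Rightarrow> (nat \<Rightarrow> bool)" where
  "restr x A = (\<lambda>i. if i \<in> A then x i else False)"

definition pure_state_on :: "nat set \<Rightarrow> ((nat \<Rightarrow> bool) \<Rightarrow> complex) \<Rightarrow> bool" where
  "pure_state_on A \<psi> \<longleftrightarrow> (\<Sum>x\<in>asg A. (cmod (\<psi> x))\<^sup>2) = 1"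

definition biseparable_pure :: "nat \<Rightarrow> ((nat \<Rightarrow> bool) \<Rightarrow> complex) \<Rightarrow> bool" where
  "biseparable_pure n \<psi> \<longleftrightarrow> pure_state_on {..<n} \<psi> \<and>
     (\<exists>S \<phi> \<chi>. S \<subseteq> {..<n} \<and> S \<noteq> {} \<and> S \<noteq> {..<n} \<and>
        pure_state_on S \<phi> \<and> pure_state_on ({..<n} - S) \<chi> \<and>
        (\<forall>x\<in>asg {..<n}. \<psi> x = \<phi> (restr x S) * \<chi> (restr x ({..<n} - S))))"

text \<open>Density matrices as matrix-entry functions on the basis asg {..<n}.
 A mixed state is biseparable if it is a finite convex combination of projectors
 onto biseparable pure states.\<close>
definition biseparable :: "nat \<Rightarrow> ((nat \<Rightarrow> bool) \<Rightarrow> (nat \<Rightarrow> bool) \<Rightarrow> complex) \<Rightarrow> bool" where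
  "biseparable n \<rho> \<longleftrightarrow> (\<exists>m (p :: nat \<Rightarrow> real) \<psi>.
     (\<forall>k<m. p k \<ge> 0) \<and> (\<Sum>k<m. p k) = 1 \<and> (\<forall>k<m. biseparable_pure n (\<psi> k)) \<and>
     (\<forall>x\<in>asg {..<n}. \<forall>y\<in>asg {..<n}.
        \<rho> x y = (\<Sum>k<m. complex_of_real (p k) * \<psi> k x * cnj (\<psi> k y))))"

definition trace_prod :: "nat \<Rightarrow> ((nat \<Rightarrow> bool) \<Rightarrow> (nat \<Rightarrow> bool) \<Rightarrow> complex)
     \<Rightarrow> ((nat \<Rightarrow> bool) \<Rightarrow> (nat \<Rightarrow> bool) \<Rightarrow> complex) \<Rightarrow> complex" where
  "trace_prod n \<rho> M = (\<Sum>x\<in>asg {..<n}. \<Sum>y\<in>asg {..<n}. \<rho> x y * M y x)"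

text \<open>n-fold tensor power of a single-qubit operator A (entries A a b = <a|A|b>).\<close>
definition tensor_pow :: "nat \<Rightarrow> (bool \<Rightarrow> bool \<Rightarrow> complex) \<Rightarrow> (nat \<Rightarrow> bool) \<Rightarrow> (nat \<Rightarrow> bool) \<Rightarrow> complex" where
  "tensor_pow n A x y = (\<Prod>i<n. A (x i) (y i))"

definition proj0 :: "bool \<Rightarrow> bool \<Rightarrow> complex" where
  "proj0 a b = (if \<not> a \<and> \<not> b then 1 else 0)"

definition proj1 :: "bool \<Rightarrow> bool \<Rightarrow> complex" where
  "proj1 a b = (if a \<and> b then 1 else 0)"

definition sigma_x :: "bool \<Rightarrow> bool \<Rightarrow> complex" where
  "sigma_x a b = (if a \<noteq> b then 1 else 0)"

definition M_Z :: "nat \<Rightarrow> (nat \<Rightarrow> bool) \<Rightarrow> (nat \<Rightarrow> bool) \<Rightarrow> complex" where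
  "M_Z n x y = tensor_pow n proj0 x y + tensor_pow n proj1 x y"

definition M_X :: "nat \<Rightarrow> (nat \<Rightarrow> bool) \<Rightarrow> (nat \<Rightarrow> bool) \<Rightarrow> complex" where
  "M_X n x y = tensor_pow n sigma_x x y"

end

theory Submission
  imports Defs
begin

text \<open>By convexity it suffices to treat a pure state \<open>\<psi> = \<phi> \<otimes> \<chi>\<close> that is a product across a
 bipartition \<open>S | T\<close>. Writing \<open>p, q\<close> for the amplitudes of \<open>\<phi>\<close> on \<open>|0\<dots>0\<rangle>, |1\<dots>1\<rangle>\<close> and
 \<open>a, b\<close> for those of \<open>\<chi>\<close>, the \<open>M\<^sub>Z\<close> term is \<open>p\<^sup>2a\<^sup>2 + q\<^sup>2b\<^sup>2\<close>, while the \<open>M\<^sub>X\<close> term factorises into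
 \<open>\<langle>\<phi>|\<sigma>\<^sub>x\<^sup>\<otimes>\<^sup>S|\<phi>\<rangle> \<langle>\<chi>|\<sigma>\<^sub>x\<^sup>\<otimes>\<^sup>T|\<chi>\<rangle>\<close>, each factor being at most \<open>2pq + (1 - p\<^sup>2 - q\<^sup>2)\<close> in modulus.
 The resulting inequality in \<open>p, q, a, b\<close> follows from Cauchy-Schwarz, because
 \<open>(p\<^sup>2 - q\<^sup>2)\<^sup>2 + (2pq + 1 - p\<^sup>2 - q\<^sup>2)\<^sup>2 \<le> 1\<close>.\<close>

lemma sq_diff_plus_sq_coherence_le_one:
  fixes p q :: real
  assumes "p\<^sup>2 + q\<^sup>2 \<le> 1"
  shows "(p\<^sup>2 - q\<^sup>2)\<^sup>2 + (2*p*q + (1 - p\<^sup>2 - q\<^sup>2))\<^sup>2 \<le> 1"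
proof -
  have "1 - ((p\<^sup>2 - q\<^sup>2)\<^sup>2 + (2*p*q + (1 - p\<^sup>2 - q\<^sup>2))\<^sup>2) = 2 * ((1 - p\<^sup>2 - q\<^sup>2) * (p - q)\<^sup>2)"
    by (simp add: power2_eq_square algebra_simps)
  moreover have "0 \<le> (1 - p\<^sup>2 - q\<^sup>2) * (p - q)\<^sup>2"
    using assms by simp
  ultimately show ?thesis by linarith
qed

lemma product_witness_real_bound:
  fixes p q a b X \<alpha> s :: real
  assumes "p\<^sup>2 + q\<^sup>2 \<le> 1" "a\<^sup>2 + b\<^sup>2 \<le> 1"
    and "\<bar>X\<bar> \<le> (2*p*q + (1 - p\<^sup>2 - q\<^sup>2)) * (2*a*b + (1 - a\<^sup>2 - b\<^sup>2))"
    and "0 \<le> \<alpha>" "\<alpha> \<le> 2" "\<bar>s\<bar> \<le> 1"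
  shows "\<alpha> * (p\<^sup>2 * a\<^sup>2 + q\<^sup>2 * b\<^sup>2) + s * X \<le> \<alpha> / 2 + 1"
proof -
  define d1 w1 d2 w2 where "d1 = p\<^sup>2 - q\<^sup>2" and "w1 = 2*p*q + (1 - p\<^sup>2 - q\<^sup>2)"
    and "d2 = a\<^sup>2 - b\<^sup>2" and "w2 = 2*a*b + (1 - a\<^sup>2 - b\<^sup>2)"
  have "d1\<^sup>2 + w1\<^sup>2 \<le> 1" "d2\<^sup>2 + w2\<^sup>2 \<le> 1"
    using assms(1,2) sq_diff_plus_sq_coherence_le_one
    unfolding d1_def w1_def d2_def w2_def by blast+
  moreover have "2 * (\<bar>d1\<bar> * \<bar>d2\<bar>) \<le> d1\<^sup>2 + d2\<^sup>2" "2 * (w1 * w2) \<le> w1\<^sup>2 + w2\<^sup>2"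
    using sum_squares_bound[of "\<bar>d1\<bar>" "\<bar>d2\<bar>"] sum_squares_bound[of w1 w2]
    by (simp_all add: power2_eq_square)
  ultimately have cauchy_schwarz: "\<bar>d1 * d2\<bar> + w1 * w2 \<le> 1"
    by (simp add: abs_mult)
  have "\<alpha> * (p\<^sup>2 * a\<^sup>2 + q\<^sup>2 * b\<^sup>2) = \<alpha> * ((p\<^sup>2 + q\<^sup>2) * (a\<^sup>2 + b\<^sup>2)) / 2 + \<alpha> * (d1 * d2) / 2"
    unfolding d1_def d2_def by (simp add: field_simps)
  also have "\<dots> \<le> \<alpha> / 2 + \<bar>d1 * d2\<bar>"
  proof -
    have "(p\<^sup>2 + q\<^sup>2) * (a\<^sup>2 + b\<^sup>2) \<le> 1"
      using assms(1,2) by (simp add: mult_le_one)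
    then have "\<alpha> * ((p\<^sup>2 + q\<^sup>2) * (a\<^sup>2 + b\<^sup>2)) \<le> \<alpha>"
      using assms(4) by (simp add: mult_left_le)
    moreover have "\<alpha> * (d1 * d2) \<le> 2 * \<bar>d1 * d2\<bar>"
    proof (cases "0 \<le> d1 * d2")
      case True
      then show ?thesis using assms(5) by (simp add: mult_right_mono)
    next
      case False
      then have "\<alpha> * (d1 * d2) \<le> 0" using assms(4) by (simp add: mult_nonneg_nonpos)
      then show ?thesis by linarith
    qed
    ultimately show ?thesis by linarith
  qed
  finally have "\<alpha> * (p\<^sup>2 * a\<^sup>2 + q\<^sup>2 * b\<^sup>2) \<le> \<alpha> / 2 + \<bar>d1 * d2\<bar>" .
  moreover have "s * X \<le> w1 * w2"
  proof -
    have "s * X \<le> \<bar>s\<bar> * \<bar>X\<bar>"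
      by (metis abs_ge_self abs_mult)
    also have "\<dots> \<le> \<bar>X\<bar>"
      using assms(6) by (simp add: mult_left_le_one_le)
    finally show ?thesis
      using assms(3) unfolding w1_def w2_def by linarith
  qed
  ultimately show ?thesis using cauchy_schwarz by linarith
qed

definition zeros :: "nat \<Rightarrow> bool" where
  "zeros = (\<lambda>_. False)"

definition ones :: "nat set \<Rightarrow> nat \<Rightarrow> bool" where
  "ones A = (\<lambda>i. i \<in> A)"

definition flip :: "nat set \<Rightarrow> (nat \<Rightarrow> bool) \<Rightarrow> nat \<Rightarrow> bool" where
  "flip A x = (\<lambda>i. i \<in> A \<and> \<not> x i)"

lemma finite_asg: "finite A \<Longrightarrow> finite (asg A)"
proof -
  assume "finite A"
  moreover have "asg A \<subseteq> (\<lambda>B i. i \<in> B) ` Pow A"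
  proof
    fix x assume "x \<in> asg A"
    then have "x = (\<lambda>i. i \<in> {i. x i})" "{i. x i} \<in> Pow A" by (auto simp: asg_def)
    then show "x \<in> (\<lambda>B i. i \<in> B) ` Pow A" by blast
  qed
  ultimately show ?thesis using finite_subset by blast
qed

lemma zeros_in_asg [simp]: "zeros \<in> asg A"
  by (simp add: zeros_def asg_def)

lemma ones_in_asg [simp]: "ones A \<in> asg A"
  by (simp add: ones_def asg_def)

lemma flip_in_asg [simp]: "flip A x \<in> asg A"
  by (simp add: flip_def asg_def)

lemma restr_in_asg [simp]: "restr x A \<in> asg A"
  by (simp add: restr_def asg_def)

lemma flip_flip [simp]: "x \<in> asg A \<Longrightarrow> flip A (flip A x) = x"
  by (auto simp: flip_def asg_def fun_eq_iff)

lemma flip_zeros [simp]: "flip A zeros = ones A"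
  by (simp add: flip_def zeros_def ones_def)

lemma flip_ones [simp]: "flip A (ones A) = zeros"
  by (simp add: flip_def zeros_def ones_def)

lemma zeros_neq_ones: "A \<noteq> {} \<Longrightarrow> zeros \<noteq> ones A"
  by (auto simp: zeros_def ones_def fun_eq_iff)

lemma restr_zeros [simp]: "restr zeros A = zeros"
  by (simp add: restr_def zeros_def)

lemma restr_ones: "S \<subseteq> N \<Longrightarrow> restr (ones N) S = ones S"
  by (auto simp: restr_def ones_def fun_eq_iff)

lemma restr_flip: "S \<subseteq> N \<Longrightarrow> restr (flip N x) S = flip S (restr x S)"
  by (auto simp: restr_def flip_def fun_eq_iff)

lemma sum_asg_split:
  fixes f g :: "(nat \<Rightarrow> bool) \<Rightarrow> 'a :: comm_semiring_1"
  assumes "finite N" "S \<subseteq> N"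
  shows "(\<Sum>x\<in>asg N. f (restr x S) * g (restr x (N - S)))
       = (\<Sum>u\<in>asg S. f u) * (\<Sum>v\<in>asg (N - S). g v)"
proof -
  have restr_join: "restr (\<lambda>i. u i \<or> v i) S = u" "restr (\<lambda>i. u i \<or> v i) (N - S) = v"
    if "u \<in> asg S" "v \<in> asg (N - S)" for u v
    using that unfolding asg_def restr_def by fastforce+
  have join_restr: "(\<lambda>i. restr x S i \<or> restr x (N - S) i) = x" if "x \<in> asg N" for x
    using that assms(2) unfolding asg_def restr_def by fastforce
  have "(\<Sum>u\<in>asg S. f u) * (\<Sum>v\<in>asg (N - S). g v) = (\<Sum>(u, v)\<in>asg S \<times> asg (N - S). f u * g v)"
    by (simp add: sum_product sum.cartesian_product)
  also have "\<dots> = (\<Sum>x\<in>asg N. f (restr x S) * g (restr x (N - S)))"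
    by (rule sum.reindex_bij_witness[where i="\<lambda>x. (restr x S, restr x (N - S))"
          and j="\<lambda>(u, v) i. u i \<or> v i"])
      (use assms(2) in \<open>auto simp: restr_join join_restr, auto simp: asg_def\<close>)
  finally show ?thesis by simp
qed

text \<open>\<open>flip_overlap A f\<close> is \<open>\<langle>f|\<sigma>\<^sub>x\<^sup>\<otimes>\<^sup>A|f\<rangle>\<close>.\<close>

definition flip_overlap :: "nat set \<Rightarrow> ((nat \<Rightarrow> bool) \<Rightarrow> complex) \<Rightarrow> complex" where
  "flip_overlap A f = (\<Sum>u\<in>asg A. cnj (f (flip A u)) * f u)"

lemma flip_overlap_product:
  assumes "finite N" "S \<subseteq> N"
    and "\<And>x. x \<in> asg N \<Longrightarrow> \<psi> x = \<phi> (restr x S) * \<chi> (restr x (N - S))"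
  shows "flip_overlap N \<psi> = flip_overlap S \<phi> * flip_overlap (N - S) \<chi>"
proof -
  have "flip_overlap N \<psi> = (\<Sum>x\<in>asg N. (cnj (\<phi> (flip S (restr x S))) * \<phi> (restr x S))
          * (cnj (\<chi> (flip (N - S) (restr x (N - S)))) * \<chi> (restr x (N - S))))"
    unfolding flip_overlap_def
    by (rule sum.cong[OF refl]) (simp add: assms(2,3) restr_flip)
  also have "\<dots> = flip_overlap S \<phi> * flip_overlap (N - S) \<chi>"
    unfolding flip_overlap_def by (rule sum_asg_split[OF assms(1,2)])
  finally show ?thesis .
qed

lemma sum_zeros_ones_le:
  fixes f :: "(nat \<Rightarrow> bool) \<Rightarrow> complex"
  assumes "finite A" "A \<noteq> {}"
  shows "(cmod (f zeros))\<^sup>2 + (cmod (f (ones A)))\<^sup>2 \<le> (\<Sum>u\<in>asg A. (cmod (f u))\<^sup>2)"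
proof -
  have "(\<Sum>u\<in>{zeros, ones A}. (cmod (f u))\<^sup>2) \<le> (\<Sum>u\<in>asg A. (cmod (f u))\<^sup>2)"
    by (rule sum_mono2) (use assms finite_asg in auto)
  then show ?thesis using zeros_neq_ones[OF assms(2)] by simp
qed

lemma sum_flip_reindex:
  assumes "R \<subseteq> asg A" "\<And>u. u \<in> R \<Longrightarrow> flip A u \<in> R"
  shows "(\<Sum>u\<in>R. g (flip A u)) = (\<Sum>u\<in>R. g u)"
  by (rule sum.reindex_bij_witness[where i="flip A" and j="flip A"]) (use assms in auto)

text \<open>Away from \<open>|0\<dots>0\<rangle>\<close> and \<open>|1\<dots>1\<rangle>\<close>, which \<open>flip\<close> swaps, AM-GM bounds each term
 \<open>|f(flip u)| |f u|\<close> by the mean of the two squared moduli, and \<open>flip\<close> permutes the remaining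
 basis states.\<close>

lemma norm_flip_overlap_le:
  fixes f :: "(nat \<Rightarrow> bool) \<Rightarrow> complex"
  assumes "finite A" "A \<noteq> {}"
  shows "cmod (flip_overlap A f) \<le> 2 * cmod (f zeros) * cmod (f (ones A))
     + ((\<Sum>u\<in>asg A. (cmod (f u))\<^sup>2) - (cmod (f zeros))\<^sup>2 - (cmod (f (ones A)))\<^sup>2)"
proof -
  define R where "R = asg A - {zeros, ones A}"
  define h where "h u = cnj (f (flip A u)) * f u" for u
  have fin: "finite R" using assms(1) finite_asg by (simp add: R_def)
  have asg_split: "asg A = insert zeros (insert (ones A) R)" "zeros \<notin> insert (ones A) R" "ones A \<notin> R"
    using zeros_neq_ones[OF assms(2)] by (auto simp: R_def)
  have flip_R: "flip A u \<in> R" if "u \<in> R" for u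
  proof -
    have u: "u \<in> asg A" "u \<noteq> zeros" "u \<noteq> ones A"
      using that by (auto simp: R_def)
    have "flip A u \<noteq> zeros" "flip A u \<noteq> ones A"
      using u flip_flip[OF u(1)] by (metis flip_zeros, metis flip_ones)
    then show ?thesis by (simp add: R_def)
  qed
  have "cmod (\<Sum>u\<in>R. h u) \<le> (\<Sum>u\<in>R. ((cmod (f u))\<^sup>2 + (cmod (f (flip A u)))\<^sup>2) / 2)"
  proof (rule order_trans[OF norm_sum sum_mono])
    fix u
    show "cmod (h u) \<le> ((cmod (f u))\<^sup>2 + (cmod (f (flip A u)))\<^sup>2) / 2"
      using sum_squares_bound[of "cmod (f u)" "cmod (f (flip A u))"]
      by (simp add: h_def norm_mult power2_eq_square mult_ac)
  qed
  also have "\<dots> = (\<Sum>u\<in>R. (cmod (f u))\<^sup>2)"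
    using sum_flip_reindex[of R A "\<lambda>u. (cmod (f u))\<^sup>2"] flip_R
    by (simp add: sum_divide_distrib[symmetric] sum.distrib R_def)
  finally have rest: "cmod (\<Sum>u\<in>R. h u) \<le> (\<Sum>u\<in>R. (cmod (f u))\<^sup>2)" .
  have "cmod (flip_overlap A f) \<le> cmod (h zeros) + cmod (h (ones A)) + cmod (\<Sum>u\<in>R. h u)"
    unfolding flip_overlap_def h_def[symmetric] asg_split(1)
    using fin asg_split(2,3) norm_triangle_ineq[of "h zeros + h (ones A)" "\<Sum>u\<in>R. h u"]
      norm_triangle_ineq[of "h zeros" "h (ones A)"]
    by (simp add: add.assoc)
  moreover have "(\<Sum>u\<in>asg A. (cmod (f u))\<^sup>2)
      = (cmod (f zeros))\<^sup>2 + (cmod (f (ones A)))\<^sup>2 + (\<Sum>u\<in>R. (cmod (f u))\<^sup>2)"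
    unfolding asg_split(1) using fin asg_split(2,3) by (simp add: add.assoc)
  ultimately show ?thesis using rest by (simp add: h_def norm_mult)
qed

definition expval :: "nat \<Rightarrow> ((nat \<Rightarrow> bool) \<Rightarrow> (nat \<Rightarrow> bool) \<Rightarrow> complex)
    \<Rightarrow> ((nat \<Rightarrow> bool) \<Rightarrow> complex) \<Rightarrow> complex" where
  "expval n M \<psi> = (\<Sum>x\<in>asg {..<n}. \<Sum>y\<in>asg {..<n}. cnj (\<psi> y) * M y x * \<psi> x)"

lemma trace_prod_mixture:
  assumes "\<forall>x\<in>asg {..<n}. \<forall>y\<in>asg {..<n}.
      \<rho> x y = (\<Sum>k<m. complex_of_real (p k) * \<psi> k x * cnj (\<psi> k y))"
  shows "trace_prod n \<rho> M = (\<Sum>k<m. complex_of_real (p k) * expval n M (\<psi> k))"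
proof -
  have "trace_prod n \<rho> M = (\<Sum>x\<in>asg {..<n}. \<Sum>y\<in>asg {..<n}. \<Sum>k<m.
      complex_of_real (p k) * (cnj (\<psi> k y) * M y x * \<psi> k x))"
    unfolding trace_prod_def using assms
    by (intro sum.cong refl) (simp add: sum_distrib_left sum_distrib_right mult_ac)
  then show ?thesis
    unfolding expval_def by (simp add: sum_distrib_left sum.swap[of _ "{..<m}"])
qed

lemma tensor_pow_indicator:
  assumes "\<And>a b. A a b = (if P a b then 1 else 0)"
  shows "tensor_pow n A x y = (if \<forall>i<n. P (x i) (y i) then 1 else 0)"
  unfolding tensor_pow_def by (induction n) (auto simp: assms less_Suc_eq)

lemma M_Z_entry:
  assumes "x \<in> asg {..<n}" "y \<in> asg {..<n}"
  shows "M_Z n y x = (if y = zeros \<and> x = zeros then 1 else 0)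
                   + (if y = ones {..<n} \<and> x = ones {..<n} then 1 else 0)"
proof -
  have "(\<forall>i<n. \<not> y i \<and> \<not> x i) \<longleftrightarrow> y = zeros \<and> x = zeros"
    "(\<forall>i<n. y i \<and> x i) \<longleftrightarrow> y = ones {..<n} \<and> x = ones {..<n}"
    using assms by (auto simp: asg_def zeros_def ones_def fun_eq_iff)
  then show ?thesis
    unfolding M_Z_def
    by (simp add: tensor_pow_indicator[of proj0 "\<lambda>a b. \<not> a \<and> \<not> b"]
        tensor_pow_indicator[of proj1 "\<lambda>a b. a \<and> b"] proj0_def proj1_def)
qed

lemma M_X_entry:
  assumes "x \<in> asg {..<n}" "y \<in> asg {..<n}"
  shows "M_X n y x = (if y = flip {..<n} x then 1 else 0)"
proof -
  have "(\<forall>i<n. y i \<noteq> x i) \<longleftrightarrow> y = flip {..<n} x"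
    using assms by (auto simp: asg_def flip_def fun_eq_iff)
  then show ?thesis
    unfolding M_X_def by (simp add: tensor_pow_indicator[of sigma_x "(\<noteq>)"] sigma_x_def)
qed

lemma expval_M_Z:
  "expval n (M_Z n) \<psi> = complex_of_real ((cmod (\<psi> zeros))\<^sup>2 + (cmod (\<psi> (ones {..<n})))\<^sup>2)"
proof -
  let ?N = "{..<n}"
  have fin: "finite (asg ?N)" by (simp add: finite_asg)
  have entry: "cnj (\<psi> y) * M_Z n y x * \<psi> x
      = (if y = zeros then (if x = zeros then cnj (\<psi> zeros) * \<psi> zeros else 0) else 0)
      + (if y = ones ?N then (if x = ones ?N then cnj (\<psi> (ones ?N)) * \<psi> (ones ?N) else 0) else 0)"
    if "x \<in> asg ?N" "y \<in> asg ?N" for x y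
    using that by (simp add: M_Z_entry distrib_left distrib_right)
  have norm_sq: "cnj z * z = complex_of_real ((cmod z)\<^sup>2)" for z
    by (subst mult.commute) (rule complex_norm_square[symmetric])
  have "expval n (M_Z n) \<psi> = cnj (\<psi> zeros) * \<psi> zeros + cnj (\<psi> (ones ?N)) * \<psi> (ones ?N)"
    unfolding expval_def by (simp add: entry sum.distrib fin cong: sum.cong)
  then show ?thesis
    by (simp only: norm_sq of_real_add)
qed

lemma expval_M_X: "expval n (M_X n) \<psi> = flip_overlap {..<n} \<psi>"
proof -
  let ?N = "{..<n}"
  have entry: "cnj (\<psi> y) * M_X n y x * \<psi> x = (if y = flip ?N x then cnj (\<psi> (flip ?N x)) * \<psi> x else 0)"
    if "x \<in> asg ?N" "y \<in> asg ?N" for x y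
    using that by (simp add: M_X_entry)
  show ?thesis
    unfolding expval_def flip_overlap_def by (simp add: entry finite_asg cong: sum.cong)
qed

lemma biseparable_pure_bound:
  assumes "biseparable_pure n \<psi>" "0 \<le> \<alpha>" "\<alpha> \<le> 2" "\<bar>s\<bar> \<le> 1"
  shows "\<alpha> * Re (expval n (M_Z n) \<psi>) + s * Re (expval n (M_X n) \<psi>) \<le> \<alpha> / 2 + 1"
proof -
  let ?N = "{..<n}"
  obtain S \<phi> \<chi> where S: "S \<subseteq> ?N" "S \<noteq> {}" "S \<noteq> ?N"
    and norm_\<phi>: "pure_state_on S \<phi>" and norm_\<chi>: "pure_state_on (?N - S) \<chi>"
    and product: "\<forall>x\<in>asg ?N. \<psi> x = \<phi> (restr x S) * \<chi> (restr x (?N - S))"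
    using assms(1) unfolding biseparable_pure_def by blast
  define T where "T = ?N - S"
  have T: "T \<subseteq> ?N" "T \<noteq> {}" "finite T" "finite S"
    using S finite_subset unfolding T_def by auto
  define p q a b where "p = cmod (\<phi> zeros)" and "q = cmod (\<phi> (ones S))"
    and "a = cmod (\<chi> zeros)" and "b = cmod (\<chi> (ones T))"
  have \<phi>: "cmod (flip_overlap S \<phi>) \<le> 2*p*q + (1 - p\<^sup>2 - q\<^sup>2)" "p\<^sup>2 + q\<^sup>2 \<le> 1"
    using norm_flip_overlap_le[of S \<phi>] sum_zeros_ones_le[of S \<phi>] norm_\<phi> T(4) S(2)
    unfolding pure_state_on_def p_def q_def by simp_all
  have \<chi>: "cmod (flip_overlap T \<chi>) \<le> 2*a*b + (1 - a\<^sup>2 - b\<^sup>2)" "a\<^sup>2 + b\<^sup>2 \<le> 1"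
    using norm_flip_overlap_le[of T \<chi>] sum_zeros_ones_le[of T \<chi>] norm_\<chi> T(2,3)
    unfolding pure_state_on_def a_def b_def T_def by simp_all
  have "flip_overlap ?N \<psi> = flip_overlap S \<phi> * flip_overlap T \<chi>"
    using flip_overlap_product[of ?N S \<psi> \<phi> \<chi>] S(1) product by (simp add: T_def)
  then have "\<bar>Re (flip_overlap ?N \<psi>)\<bar> \<le> cmod (flip_overlap S \<phi>) * cmod (flip_overlap T \<chi>)"
    by (metis abs_Re_le_cmod norm_mult)
  also have "\<dots> \<le> (2*p*q + (1 - p\<^sup>2 - q\<^sup>2)) * (2*a*b + (1 - a\<^sup>2 - b\<^sup>2))"
    using \<phi>(1) \<chi>(1) by (intro mult_mono) (auto intro: order_trans[OF norm_ge_zero])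
  finally have "\<bar>Re (expval n (M_X n) \<psi>)\<bar> \<le> (2*p*q + (1 - p\<^sup>2 - q\<^sup>2)) * (2*a*b + (1 - a\<^sup>2 - b\<^sup>2))"
    unfolding expval_M_X .
  moreover have "Re (expval n (M_Z n) \<psi>) = p\<^sup>2 * a\<^sup>2 + q\<^sup>2 * b\<^sup>2"
    using product restr_ones[OF S(1)] restr_ones[OF T(1)]
    by (simp add: expval_M_Z p_def q_def a_def b_def T_def norm_mult power_mult_distrib)
  ultimately show ?thesis
    using product_witness_real_bound[OF \<phi>(2) \<chi>(2) _ assms(2-4)] by simp
qed

theorem theorem1:
  fixes n :: nat and \<alpha> :: real and s :: real
    and \<rho> :: "(nat \<Rightarrow> bool) \<Rightarrow> (nat \<Rightarrow> bool) \<Rightarrow> complex"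
  assumes "n \<ge> 2" and "0 < \<alpha>" and "\<alpha> \<le> 2" and "s = 1 \<or> s = -1"
    and "biseparable n \<rho>"
  shows "\<alpha> * Re (trace_prod n \<rho> (M_Z n)) + s * Re (trace_prod n \<rho> (M_X n)) \<le> \<alpha> / 2 + 1"
proof -
  obtain m :: nat and p \<psi> where p_nonneg: "\<forall>k<m. p k \<ge> 0" and p_sum: "(\<Sum>k<m. p k) = 1"
    and pure: "\<forall>k<m. biseparable_pure n (\<psi> k)"
    and mixture: "\<forall>x\<in>asg {..<n}. \<forall>y\<in>asg {..<n}.
        \<rho> x y = (\<Sum>k<m. complex_of_real (p k) * \<psi> k x * cnj (\<psi> k y))"
    using assms(5) unfolding biseparable_def by blast
  let ?W = "\<lambda>k. \<alpha> * Re (expval n (M_Z n) (\<psi> k)) + s * Re (expval n (M_X n) (\<psi> k))"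
  have "\<alpha> * Re (trace_prod n \<rho> (M_Z n)) + s * Re (trace_prod n \<rho> (M_X n)) = (\<Sum>k<m. p k * ?W k)"
    unfolding trace_prod_mixture[OF mixture] Re_sum
    by (simp add: sum_distrib_left sum.distrib algebra_simps)
  also have "\<dots> \<le> (\<Sum>k<m. p k * (\<alpha> / 2 + 1))"
    using p_nonneg pure biseparable_pure_bound[of n _ \<alpha> s] assms(2-4)
    by (intro sum_mono mult_left_mono) auto
  also have "\<dots> = \<alpha> / 2 + 1"
    using p_sum by (simp add: sum_distrib_right[symmetric])
  finally show ?thesis .
qed

end
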